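(* Let $G$ be a finite connected interval graph that is balanced and $p$-critical (for some $p\ge1$), and let $z$ be the basepoint of $G$. (a) If there is at most one exterior local component at $z$, then there are at least two local components at $z$ which are cliques and have maximum order among the local components at $z$. (b) If there is no exterior local component at $z$, then there are at least three local components at $z$ which are cliques and have maximum order among the local components at $z$.
   Context: An interval graph is a finite simple graph whose vertices can be assigned (closed, bounded) real intervals $I_v$ so that $v,w$ are adjacent iff $I_v\cap I_w\ne\emptyset$. For such a representation $\alpha$, $\mathrm{imp}_\alpha(z)$ is the number of intervals $I_w$, $w\ne z$, with $I_w\subseteq I_z$; $\mathrm{imp}(\alpha)=\max_z\mathrm{imp}_\alpha(z)$; and the impropriety $\mathrm{imp}(G)$ is the minimum of $\mathrm{imp}(\alpha)$ over all representations. A local component at $z$ is a connected component of $G\setminus\{z\}$; it is exterior iff it contains a vertex not adjacent to $z$. If $z$ has $n$ local components, $\mathrm{wt}(z)$ is the sum of the $n-2$ smallest orders among the non-exterior local components at $z$ ($0$ if $n\le2$), and $\mathrm{wt}(G)=\max_z \mathrm{wt}(z)$. $G$ is balanced iff $\mathrm{wt}(G)=\mathrm{imp}(G)$. If $G$ is balanced, a basepoint of $G$ is a vertex $z$ with $\mathrm{wt}(z)=\mathrm{imp}(G)$ (a balanced $p$-critical graph has exactly one basepoint). For $p>0$, $G$ is $p$-critical iff $\mathrm{imp}(G)=p$ and every proper induced subgraph of $G$ has impropriety strictly less than $p$. *)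

theory Defs
  imports Complex_Main "HOL-Library.Multiset"
begin

text \<open>A finite simple graph is given by a vertex set V and a symmetric,
irreflexive adjacency relation E; only the restriction of E to V matters.
The induced subgraph on S \<subseteq> V is (S, E).\<close>

definition simple_graph :: "'a set \<Rightarrow> ('a \<Rightarrow> 'a \<Rightarrow> bool) \<Rightarrow> bool" where
  "simple_graph V E \<longleftrightarrow> finite V \<and>
     (\<forall>u\<in>V. \<forall>v\<in>V. E u v \<longleftrightarrow> E v u) \<and> (\<forall>v\<in>V. \<not> E v v)"

definition interval_rep :: "'a set \<Rightarrow> ('a \<Rightarrow> 'a \<Rightarrow> bool) \<Rightarrow> ('a \<Rightarrow> real) \<Rightarrow> ('a \<Rightarrow> real) \<Rightarrow> bool" where
  "interval_rep V E lo hi \<longleftrightarrow> (\<forall>v\<in>V. lo v \<le> hi v) \<and>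
     (\<forall>v\<in>V. \<forall>w\<in>V. v \<noteq> w \<longrightarrow> (E v w \<longleftrightarrow> {lo v..hi v} \<inter> {lo w..hi w} \<noteq> {}))"

definition interval_graph :: "'a set \<Rightarrow> ('a \<Rightarrow> 'a \<Rightarrow> bool) \<Rightarrow> bool" where
  "interval_graph V E \<longleftrightarrow> simple_graph V E \<and> (\<exists>lo hi. interval_rep V E lo hi)"

definition imp_at :: "'a set \<Rightarrow> ('a \<Rightarrow> real) \<Rightarrow> ('a \<Rightarrow> real) \<Rightarrow> 'a \<Rightarrow> nat" where
  "imp_at V lo hi z = card {w \<in> V - {z}. {lo w..hi w} \<subseteq> {lo z..hi z}}"

definition imp_rep :: "'a set \<Rightarrow> ('a \<Rightarrow> real) \<Rightarrow> ('a \<Rightarrow> real) \<Rightarrow> nat" where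
  "imp_rep V lo hi = Max (insert 0 (imp_at V lo hi ` V))"

definition impropriety :: "'a set \<Rightarrow> ('a \<Rightarrow> 'a \<Rightarrow> bool) \<Rightarrow> nat" where
  "impropriety V E = Inf {imp_rep V lo hi | lo hi. interval_rep V E lo hi}"

definition reach :: "'a set \<Rightarrow> ('a \<Rightarrow> 'a \<Rightarrow> bool) \<Rightarrow> 'a \<Rightarrow> 'a \<Rightarrow> bool" where
  "reach S E = (\<lambda>x y. E x y \<and> x \<in> S \<and> y \<in> S)\<^sup>*\<^sup>*"

definition connected_graph :: "'a set \<Rightarrow> ('a \<Rightarrow> 'a \<Rightarrow> bool) \<Rightarrow> bool" where
  "connected_graph V E \<longleftrightarrow> V \<noteq> {} \<and> (\<forall>u\<in>V. \<forall>v\<in>V. reach V E u v)"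

definition components :: "'a set \<Rightarrow> ('a \<Rightarrow> 'a \<Rightarrow> bool) \<Rightarrow> 'a set set" where
  "components S E = {{w \<in> S. reach S E v w} | v. v \<in> S}"

definition local_components :: "'a set \<Rightarrow> ('a \<Rightarrow> 'a \<Rightarrow> bool) \<Rightarrow> 'a \<Rightarrow> 'a set set" where
  "local_components V E z = components (V - {z}) E"

definition exterior :: "('a \<Rightarrow> 'a \<Rightarrow> bool) \<Rightarrow> 'a \<Rightarrow> 'a set \<Rightarrow> bool" where
  "exterior E z C \<longleftrightarrow> (\<exists>w\<in>C. \<not> E z w)"

text \<open>wt(z): sum of the n-2 smallest orders among the non-exterior local components
  (n = number of local components); 0 if n \<le> 2.\<close>
definition wt_at :: "'a set \<Rightarrow> ('a \<Rightarrow> 'a \<Rightarrow> bool) \<Rightarrow> 'a \<Rightarrow> nat" where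
  "wt_at V E z =
    (let LC = local_components V E z;
         n = card LC;
         NE = {C \<in> LC. \<not> exterior E z C}
     in sum_list (take (n - 2) (sorted_list_of_multiset (image_mset card (mset_set NE)))))"

definition wt :: "'a set \<Rightarrow> ('a \<Rightarrow> 'a \<Rightarrow> bool) \<Rightarrow> nat" where
  "wt V E = Max (insert 0 (wt_at V E ` V))"

definition balanced :: "'a set \<Rightarrow> ('a \<Rightarrow> 'a \<Rightarrow> bool) \<Rightarrow> bool" where
  "balanced V E \<longleftrightarrow> wt V E = impropriety V E"

definition basepoint :: "'a set \<Rightarrow> ('a \<Rightarrow> 'a \<Rightarrow> bool) \<Rightarrow> 'a \<Rightarrow> bool" where
  "basepoint V E z \<longleftrightarrow> balanced V E \<and> z \<in> V \<and> wt_at V E z = impropriety V E"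

definition critical :: "nat \<Rightarrow> 'a set \<Rightarrow> ('a \<Rightarrow> 'a \<Rightarrow> bool) \<Rightarrow> bool" where
  "critical p V E \<longleftrightarrow> p > 0 \<and> impropriety V E = p \<and>
     (\<forall>S. S \<subset> V \<longrightarrow> impropriety S E < p)"

definition is_clique :: "('a \<Rightarrow> 'a \<Rightarrow> bool) \<Rightarrow> 'a set \<Rightarrow> bool" where
  "is_clique E C \<longleftrightarrow> (\<forall>x\<in>C. \<forall>y\<in>C. x \<noteq> y \<longrightarrow> E x y)"

definition max_clique_components :: "'a set \<Rightarrow> ('a \<Rightarrow> 'a \<Rightarrow> bool) \<Rightarrow> 'a \<Rightarrow> 'a set set" where
  "max_clique_components V E z =
     {C \<in> local_components V E z. is_clique E C \<and>
        card C = Max (card ` local_components V E z)}"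

end

theory Submission
  imports Defs
begin

(* Let z be the basepoint, p = wt(z) = imp(G) > 0, n the number of local
   components at z and NE the set of non-exterior ones.  By the definition of wt(z), any
   n - 2 members of NE have total order at least p.  By p-criticality, deleting a vertex
   v \<noteq> z leaves a representation with fewer than p intervals nested in I_z.  In it, at most
   one member of NE protrudes beyond I_z on the left and at most one on the right (their
   protruding intervals would meet); all other members minus v are nested in I_z.
   Deleting a vertex of a largest member D of NE, an abstract counting argument (the
   exchange lemma) shows: if at most j = |NE| + 2 - n members protrude, then exactly j do,
   D is not among them, and all of them are cliques of maximum order.  Choosing D to be a
   maximum clique when one exists yields j + 1 maximum cliques.  Without exterior
   components j = 2, giving (b).  With one exterior component X (and G connected), a
   neighbour of z in X adjacent to a non-neighbour of z blocks one side of I_z, so j = 1;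
   a separate count shows that a largest local component is non-exterior, giving (a). *)


lemma reach_edge: "E x y \<Longrightarrow> x \<in> S \<Longrightarrow> y \<in> S \<Longrightarrow> reach S E x y"
  unfolding reach_def by (rule r_into_rtranclp) simp

lemma reach_trans: "reach S E x y \<Longrightarrow> reach S E y w \<Longrightarrow> reach S E x w"
  unfolding reach_def by (rule rtranclp_trans)

lemma reach_mono: "reach S E x y \<Longrightarrow> S \<subseteq> T \<Longrightarrow> reach T E x y"
  unfolding reach_def
  by (induction rule: rtranclp_induct) (auto intro: rtranclp.rtrancl_into_rtrancl)

lemma reach_sym:
  assumes "symp_on S E" and "reach S E x y"
  shows "reach S E y x"
  using assms(2) unfolding reach_def
proof (induction rule: rtranclp_induct)
  case (step y w)
  then have "E w y" using symp_onD[OF assms(1)] by blast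
  then show ?case using step by (auto intro: converse_rtranclp_into_rtranclp)
qed simp

lemma reach_exit:
  "reach S E a b \<Longrightarrow> a \<in> T \<Longrightarrow> b \<notin> T \<Longrightarrow>
   \<exists>c d. reach (S \<inter> T) E a c \<and> c \<in> S \<inter> T \<and> E c d \<and> d \<in> S \<and> d \<notin> T"
  unfolding reach_def
proof (induction rule: converse_rtranclp_induct)
  case (step a a')
  show ?case
  proof (cases "a' \<in> T")
    case True
    then obtain c d where cd: "(\<lambda>x y. E x y \<and> x \<in> S \<inter> T \<and> y \<in> S \<inter> T)\<^sup>*\<^sup>* a' c"
      "c \<in> S \<inter> T" "E c d" "d \<in> S" "d \<notin> T" using step by blast
    then have "(\<lambda>x y. E x y \<and> x \<in> S \<inter> T \<and> y \<in> S \<inter> T)\<^sup>*\<^sup>* a c"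
      using step True by (auto intro: converse_rtranclp_into_rtranclp)
    then show ?thesis using cd by blast
  qed (use step in blast)
qed simp

lemma components_finite: "finite S \<Longrightarrow> finite (components S E)"
  unfolding components_def by simp

lemma component_subset: "C \<in> components S E \<Longrightarrow> C \<subseteq> S"
  unfolding components_def by auto

lemma component_nonempty: "C \<in> components S E \<Longrightarrow> C \<noteq> {}"
  unfolding components_def reach_def by auto

lemma component_closed:
  assumes "C \<in> components S E" "x \<in> C" "reach S E x y" "y \<in> S"
  shows "y \<in> C"
proof -
  obtain u where u: "C = {w \<in> S. reach S E u w}" using assms(1) unfolding components_def by blast
  then have "reach S E u x" using assms(2) by blast
  then have "reach S E u y" using assms(3) by (rule reach_trans)
  then show ?thesis using u assms(4) by blast
qed

lemma component_reach:
  assumes "symp_on S E" "C \<in> components S E" "x \<in> C" "y \<in> C"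
  shows "reach S E x y"
proof -
  obtain u where u: "C = {w \<in> S. reach S E u w}" using assms(2) unfolding components_def by blast
  then have "reach S E x u" using assms(3) reach_sym[OF assms(1)] by blast
  moreover have "reach S E u y" using u assms(4) by blast
  ultimately show ?thesis by (rule reach_trans)
qed

lemma components_disjoint:
  assumes "symp_on S E" "C \<in> components S E" "C' \<in> components S E" "C \<noteq> C'"
  shows "C \<inter> C' = {}"
proof (rule ccontr)
  assume "C \<inter> C' \<noteq> {}"
  then obtain x where x: "x \<in> C" "x \<in> C'" by blast
  have sub: "K \<subseteq> K'" if "K \<in> components S E" "K' \<in> components S E" "x \<in> K" "x \<in> K'"
    for K K'
  proof
    fix y assume "y \<in> K"
    then have "reach S E x y" "y \<in> S"
      using component_reach[OF assms(1) that(1,3)] component_subset[OF that(1)] by auto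
    then show "y \<in> K'" using component_closed[OF that(2,4)] by blast
  qed
  have "C = C'" using sub[of C C'] sub[of C' C] assms(2,3) x by blast
  then show False using assms(4) by blast
qed

lemma components_no_edge:
  assumes "symp_on S E" "C \<in> components S E" "C' \<in> components S E" "C \<noteq> C'"
    and "x \<in> C" "y \<in> C'"
  shows "\<not> E x y"
proof
  assume "E x y"
  moreover have "x \<in> S" "y \<in> S" using assms(2,3,5,6) component_subset by blast+
  ultimately have "reach S E x y" by (rule reach_edge)
  then have "y \<in> C" using component_closed[OF assms(2,5)] \<open>y \<in> S\<close> by blast
  then show False using components_disjoint[OF assms(1-4)] assms(6) by blast
qed


lemma interval_rep_iff:
  "interval_rep S E lo hi \<longleftrightarrow> (\<forall>v\<in>S. lo v \<le> hi v) \<and>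
     (\<forall>v\<in>S. \<forall>w\<in>S. v \<noteq> w \<longrightarrow> (E v w \<longleftrightarrow> lo v \<le> hi w \<and> lo w \<le> hi v))"
proof -
  have meet: "{a..b} \<inter> {c..d} \<noteq> {} \<longleftrightarrow> a \<le> d \<and> c \<le> b"
    if "a \<le> b" "c \<le> d" for a b c d :: real
    using that by (auto simp: max_def intro!: exI[of _ "max a c"])
  show ?thesis
  proof (cases "\<forall>v\<in>S. lo v \<le> hi v")
    case True
    then have "\<forall>v\<in>S. \<forall>w\<in>S. {lo v..hi v} \<inter> {lo w..hi w} \<noteq> {} \<longleftrightarrow> lo v \<le> hi w \<and> lo w \<le> hi v"
      using meet by blast
    then show ?thesis unfolding interval_rep_def using True by auto
  qed (auto simp: interval_rep_def)
qed

lemma interval_rep_adj: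
  "interval_rep S E lo hi \<Longrightarrow> x \<in> S \<Longrightarrow> y \<in> S \<Longrightarrow> x \<noteq> y \<Longrightarrow>
   E x y \<longleftrightarrow> lo x \<le> hi y \<and> lo y \<le> hi x"
  unfolding interval_rep_iff by blast

lemma interval_rep_restrict: "interval_rep V E lo hi \<Longrightarrow> S \<subseteq> V \<Longrightarrow> interval_rep S E lo hi"
  unfolding interval_rep_def by blast

text \<open>Reflecting the real line turns a representation into one with left and right swapped;
  this halves every left/right case distinction below.\<close>
lemma interval_rep_mirror:
  "interval_rep S E lo hi \<Longrightarrow> interval_rep S E (\<lambda>w. - hi w) (\<lambda>w. - lo w)"
  unfolding interval_rep_iff by auto

lemma optimal_rep:
  assumes "interval_rep S E lo0 hi0"
  shows "\<exists>lo hi. interval_rep S E lo hi \<and> imp_rep S lo hi = impropriety S E"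
proof -
  let ?R = "{imp_rep S lo hi | lo hi. interval_rep S E lo hi}"
  have "?R \<noteq> {}" using assms by blast
  then have "Inf ?R \<in> ?R" by (rule Inf_nat_def1)
  then obtain lo hi where "interval_rep S E lo hi" "imp_rep S lo hi = Inf ?R" by auto
  moreover have "impropriety S E = Inf ?R" unfolding impropriety_def ..
  ultimately show ?thesis by auto
qed

lemma imp_at_le_imp_rep: "finite S \<Longrightarrow> z \<in> S \<Longrightarrow> imp_at S lo hi z \<le> imp_rep S lo hi"
  unfolding imp_rep_def by (intro Max_ge) auto


(* Sums of the k smallest entries. *)

lemma sum_take_sorted_le:
  fixes xs zs :: "nat list"
  assumes "sorted xs" "mset zs \<subseteq># mset xs" "k \<le> length zs"
  shows "sum_list (take k xs) \<le> sum_list zs"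
  using assms
proof (induction xs arbitrary: zs k)
  case (Cons a ys)
  show ?case
  proof (cases k)
    case (Suc k')
    obtain b where b: "b \<in> set zs" "a \<in> set zs \<Longrightarrow> b = a"
      using Suc Cons.prems(3) by (cases zs) auto
    let ?zs = "remove1 b zs"
    have sub: "mset ?zs \<subseteq># mset ys"
    proof (cases "a \<in> set zs")
      case True
      then have "mset zs = add_mset a (mset ?zs)" using b by simp
      then show ?thesis using Cons.prems(2) by (metis mset.simps(2) mset_subset_eq_add_mset_cancel)
    next
      case False
      then have "mset zs \<subseteq># mset ys"
        using Cons.prems(2) by (simp add: inter_add_left1 subset_mset.inf.absorb_iff2)
      then show ?thesis using subset_mset.order_trans[OF diff_subset_eq_self] by simp
    qed
    have "b \<in> set (a # ys)" using Cons.prems(2) b(1) by (metis mset_subset_eqD set_mset_mset)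
    then have ab: "a \<le> b" using Cons.prems(1) by auto
    have "mset zs = add_mset b (mset ?zs)" using b(1) by simp
    then have split: "sum_list zs = b + sum_list ?zs" by (metis sum_mset.add_mset sum_mset_sum_list)
    have "k' \<le> length ?zs" using Cons.prems(3) Suc b(1) by (simp add: length_remove1)
    then have "sum_list (take k' ys) \<le> sum_list ?zs"
      using Cons.IH[OF _ sub] Cons.prems(1) by simp
    then show ?thesis using Suc ab split by simp
  qed simp
qed simp

lemma sum_smallest_orders_le:
  assumes "finite NE" "A \<subseteq> NE" "k \<le> card A"
  shows "sum_list (take k (sorted_list_of_multiset (image_mset card (mset_set NE))))
           \<le> (\<Sum>C\<in>A. card C)"
proof -
  obtain zs where zs: "mset zs = image_mset card (mset_set A)" using ex_mset by blast
  have "image_mset card (mset_set A) \<subseteq># image_mset card (mset_set NE)"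
    using assms by (intro image_mset_subseteq_mono subset_imp_msubset_mset_set)
  then have "sum_list (take k (sorted_list_of_multiset (image_mset card (mset_set NE))))
               \<le> sum_list zs"
    using zs assms by (intro sum_take_sorted_le) (auto simp: size_mset[symmetric] simp del: size_mset)
  also have "sum_list zs = (\<Sum>C\<in>A. card C)"
    by (metis sum_mset_sum_list zs sum_unfold_sum_mset)
  finally show ?thesis .
qed


(* The exchange argument, abstractly. *)

lemma exchange_total:
  fixes F B :: "'b set set"
  assumes fin: "finite F" "\<And>C. C \<in> F \<Longrightarrow> finite C"
    and disj: "pairwise disjnt F"
    and lower: "\<And>A. A \<subseteq> F \<Longrightarrow> k \<le> card A \<Longrightarrow> p \<le> (\<Sum>C\<in>A. card C)"
    and D: "D \<in> F" "v \<in> D"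
    and B: "B \<subseteq> F" "k \<le> card (F - B)"
    and Q: "finite Q" "card Q < p" "\<And>C. C \<in> F - B \<Longrightarrow> C - {v} \<subseteq> Q"
  shows "D \<in> F - B" "(\<Sum>C\<in>F - B. card C) = p" "Q = \<Union>(F - B) - {v}"
proof -
  have card_Union: "card (\<Union>(F - B)) = (\<Sum>C\<in>F - B. card C)"
    using disj fin(2) by (intro card_Union_disjoint) (auto simp: pairwise_subset)
  have p_le: "p \<le> (\<Sum>C\<in>F - B. card C)" using lower B(2) by blast
  text \<open>D is not removed: otherwise all of \<Union>(F - B) avoids v and fits into Q.\<close>
  show D_left: "D \<in> F - B"
  proof (rule ccontr)
    assume D_removed: "D \<notin> F - B"
    have "\<Union>(F - B) \<subseteq> Q"
    proof
      fix w assume "w \<in> \<Union>(F - B)"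
      then obtain C where C: "C \<in> F - B" "w \<in> C" by blast
      then have "C \<noteq> D" using D_removed by blast
      then have "C \<inter> D = {}" using pairwiseD[OF disj] C(1) D(1) unfolding disjnt_def by blast
      then show "w \<in> Q" using Q(3)[OF C(1)] C(2) D(2) by blast
    qed
    then have "card (\<Union>(F - B)) \<le> card Q" by (rule card_mono[OF Q(1)])
    then show False using card_Union p_le Q(2) by linarith
  qed
  text \<open>Since \<Union>(F - B) - {v} fits into Q, the total order of F - B is at most p.\<close>
  have sub: "\<Union>(F - B) - {v} \<subseteq> Q" using Q(3) by blast
  have "v \<in> \<Union>(F - B)" using D_left D(2) by blast
  then have card_rest: "card (\<Union>(F - B) - {v}) = (\<Sum>C\<in>F - B. card C) - 1"
    using card_Union by simp
  then have "(\<Sum>C\<in>F - B. card C) - 1 \<le> card Q" using card_mono[OF Q(1) sub] by simp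
  then show sum: "(\<Sum>C\<in>F - B. card C) = p" using p_le Q(2) by linarith
  have "card (\<Union>(F - B) - {v}) = card Q"
    using card_mono[OF Q(1) sub] card_rest sum Q(2) by linarith
  then have "\<Union>(F - B) - {v} = Q" by (rule card_subset_eq[OF Q(1) sub])
  then show "Q = \<Union>(F - B) - {v}" by simp
qed

lemma exchange:
  fixes F B :: "'b set set"
  assumes fin: "finite F" "\<And>C. C \<in> F \<Longrightarrow> finite C"
    and disj: "pairwise disjnt F"
    and lower: "\<And>A. A \<subseteq> F \<Longrightarrow> k \<le> card A \<Longrightarrow> p \<le> (\<Sum>C\<in>A. card C)"
    and D: "D \<in> F" "v \<in> D" "\<And>C. C \<in> F \<Longrightarrow> card C \<le> card D"
    and B: "B \<subseteq> F" "k \<le> card (F - B)"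
    and Q: "finite Q" "card Q < p" "\<And>C. C \<in> F - B \<Longrightarrow> C - {v} \<subseteq> Q"
    and meets: "\<And>C. C \<in> B \<Longrightarrow> C \<noteq> D \<Longrightarrow> card (F - B) = k \<Longrightarrow> \<not> K C \<Longrightarrow> C \<inter> Q \<noteq> {}"
  shows "D \<notin> B \<and> card (F - B) = k \<and> (\<forall>C\<in>B. card C = card D \<and> K C)"
proof -
  note total = exchange_total[OF fin disj lower D(1,2) B Q]
  have fin_left: "finite (F - B)" using fin(1) by simp
  have sum_rest: "(\<Sum>C\<in>F - B - {D}. card C) + card D = p"
    using sum.remove[OF fin_left total(1), of card] total(2) by simp
  have D_pos: "1 \<le> card D" using D(2) fin(2)[OF D(1)] card_0_eq by fastforce
  text \<open>Exactly k members are left: otherwise F - B - {D} would already reach p.\<close>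
  have tight: "card (F - B) = k"
  proof (rule ccontr)
    assume "card (F - B) \<noteq> k"
    then have "k \<le> card (F - B - {D})" using B(2) card.remove[OF fin_left total(1)] by simp
    then have "p \<le> (\<Sum>C\<in>F - B - {D}. card C)" using lower[of "F - B - {D}"] by blast
    then show False using sum_rest D_pos by linarith
  qed
  text \<open>Each removed member has maximum order: otherwise exchanging it for D would leave
    k members of total order below p.\<close>
  have maximal: "card C = card D" if C: "C \<in> B" for C
  proof (rule ccontr)
    assume "card C \<noteq> card D"
    then have less: "card C < card D" using D(3) B(1) C by force
    have C_left: "C \<notin> F - B - {D}" using C by blast
    have "card (insert C (F - B - {D})) = k"
      using card.remove[OF fin_left total(1)] tight C_left fin_left by simp
    then have "p \<le> (\<Sum>C\<in>insert C (F - B - {D}). card C)"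
      using lower[of "insert C (F - B - {D})"] B(1) C by blast
    also have "\<dots> = card C + (\<Sum>C\<in>F - B - {D}. card C)" using C_left fin_left by simp
    finally show False using sum_rest less by linarith
  qed
  text \<open>Each removed member has property K: otherwise it meets Q, which is filled by the
    members left, from which it is disjoint.\<close>
  have property: "K C" if C: "C \<in> B" for C
  proof (rule ccontr)
    assume "\<not> K C"
    have "C \<noteq> D" using C total(1) by blast
    then have "C \<inter> Q \<noteq> {}" using meets[OF C] tight \<open>\<not> K C\<close> by blast
    then obtain w where w: "w \<in> C" "w \<in> Q" by blast
    then have "w \<in> \<Union>(F - B)" using total(3) by simp
    then obtain C' where C': "C' \<in> F - B" "w \<in> C'" by blast
    then have "C' \<noteq> C" using C by blast
    then have "C' \<inter> C = {}" using pairwiseD[OF disj] C'(1) C B(1) unfolding disjnt_def by blast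
    then show False using C'(2) w(1) by blast
  qed
  show ?thesis using total(1) tight maximal property by blast
qed


(* Balanced p-critical graphs at their basepoint are instances. *)

locale critical_basepoint =
  fixes V :: "'a set" and E :: "'a \<Rightarrow> 'a \<Rightarrow> bool" and z :: 'a and p :: nat
  assumes simple: "simple_graph V E" and z_in_V: "z \<in> V"
    and p_wt: "p = wt_at V E z" and p_pos: "1 \<le> p"
    and deletion: "\<And>v. v \<in> V \<Longrightarrow> v \<noteq> z \<Longrightarrow>
      \<exists>lo hi. interval_rep (V - {v}) E lo hi \<and> imp_at (V - {v}) lo hi z < p"
begin

abbreviation "LC \<equiv> local_components V E z"
abbreviation "NE \<equiv> {C \<in> LC. \<not> exterior E z C}"
abbreviation "n \<equiv> card LC"

lemma finite_V: "finite V"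
  using simple unfolding simple_graph_def by blast

lemma sym_V: "u \<in> V \<Longrightarrow> w \<in> V \<Longrightarrow> E u w \<Longrightarrow> E w u"
  using simple unfolding simple_graph_def by blast

lemma symp_on_minus_z: "symp_on (V - {z}) E"
  by (rule symp_onI) (use sym_V in blast)

lemma finite_LC: "finite LC"
  unfolding local_components_def using finite_V by (simp add: components_finite)

lemma finite_NE: "finite NE"
  using finite_LC by simp

lemma LC_subset: "C \<in> LC \<Longrightarrow> C \<subseteq> V - {z}"
  unfolding local_components_def by (rule component_subset)

lemma LC_finite: "C \<in> LC \<Longrightarrow> finite C"
  using LC_subset finite_V finite_subset by blast

lemma LC_card_pos: "C \<in> LC \<Longrightarrow> 1 \<le> card C"
  using LC_finite component_nonempty[of C "V - {z}" E]
  by (fastforce simp: local_components_def Suc_le_eq card_gt_0_iff)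

lemma LC_disjoint: "C \<in> LC \<Longrightarrow> C' \<in> LC \<Longrightarrow> C \<noteq> C' \<Longrightarrow> C \<inter> C' = {}"
  unfolding local_components_def by (rule components_disjoint[OF symp_on_minus_z])

lemma LC_no_edge: "C \<in> LC \<Longrightarrow> C' \<in> LC \<Longrightarrow> C \<noteq> C' \<Longrightarrow> x \<in> C \<Longrightarrow> y \<in> C' \<Longrightarrow> \<not> E x y"
  unfolding local_components_def by (rule components_no_edge[OF symp_on_minus_z])

lemma NE_pairwise_disjnt: "pairwise disjnt NE"
  using LC_disjoint unfolding pairwise_def disjnt_def by blast

lemma NE_adjacent: "C \<in> NE \<Longrightarrow> w \<in> C \<Longrightarrow> E z w"
  unfolding exterior_def by blast

lemma wt_lower_bound:
  assumes "A \<subseteq> NE" "n - 2 \<le> card A"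
  shows "p \<le> (\<Sum>C\<in>A. card C)"
proof -
  have "p = sum_list (take (n - 2) (sorted_list_of_multiset (image_mset card (mset_set NE))))"
    unfolding p_wt wt_at_def Let_def by simp
  also have "\<dots> \<le> (\<Sum>C\<in>A. card C)" using sum_smallest_orders_le[OF finite_NE assms] .
  finally show ?thesis .
qed

lemma three_components: "3 \<le> n"
proof (rule ccontr)
  assume "\<not> 3 \<le> n"
  then have "p = 0" unfolding p_wt wt_at_def Let_def by (simp add: numeral_3_eq_3)
  then show False using p_pos by simp
qed

lemma p_le_singletons:
  assumes singleton: "\<And>D. D \<in> NE \<Longrightarrow> card D = 1" and "n - 2 \<le> card NE"
  shows "p \<le> n - 2"
proof -
  obtain A where A: "A \<subseteq> NE" "card A = n - 2" using assms(2) by (meson obtain_subset_with_card_n)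
  have "p \<le> (\<Sum>C\<in>A. card C)" using wt_lower_bound A by simp
  also have "\<dots> = card A" using singleton A(1) by (simp add: subset_eq)
  finally show ?thesis using A(2) by simp
qed

definition left_comps :: "('a \<Rightarrow> real) \<Rightarrow> 'a \<Rightarrow> 'a set set" where
  "left_comps lo v = {C \<in> NE. \<exists>w \<in> C - {v}. lo w < lo z}"

definition right_comps :: "('a \<Rightarrow> real) \<Rightarrow> 'a \<Rightarrow> 'a set set" where
  "right_comps hi v = {C \<in> NE. \<exists>w \<in> C - {v}. hi z < hi w}"

definition protruding :: "('a \<Rightarrow> real) \<Rightarrow> ('a \<Rightarrow> real) \<Rightarrow> 'a \<Rightarrow> 'a set set" where
  "protruding lo hi v = left_comps lo v \<union> right_comps hi v"

definition nested :: "('a \<Rightarrow> real) \<Rightarrow> ('a \<Rightarrow> real) \<Rightarrow> 'a \<Rightarrow> 'a set" where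
  "nested lo hi v = {w \<in> V - {v} - {z}. {lo w..hi w} \<subseteq> {lo z..hi z}}"

lemma imp_at_nested: "imp_at (V - {v}) lo hi z = card (nested lo hi v)"
  unfolding imp_at_def nested_def by simp

lemma finite_nested: "finite (nested lo hi v)"
  unfolding nested_def using finite_V by simp

lemma protruding_subset: "protruding lo hi v \<subseteq> NE"
  unfolding protruding_def left_comps_def right_comps_def by blast

lemma right_comps_mirror: "right_comps hi v = left_comps (\<lambda>w. - hi w) v"
  unfolding left_comps_def right_comps_def by simp

lemma nested_mirror: "nested (\<lambda>w. - hi w) (\<lambda>w. - lo w) v = nested lo hi v"
  unfolding nested_def by auto

context
  fixes lo hi :: "'a \<Rightarrow> real" and v :: 'a
  assumes rep: "interval_rep (V - {v}) E lo hi" and v_ne_z: "v \<noteq> z"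
begin

lemma adj_iff: "x \<in> V - {v} \<Longrightarrow> y \<in> V - {v} \<Longrightarrow> x \<noteq> y \<Longrightarrow> E x y \<longleftrightarrow> lo x \<le> hi y \<and> lo y \<le> hi x"
  by (rule interval_rep_adj[OF rep])

lemma lo_le_hi: "x \<in> V - {v} \<Longrightarrow> lo x \<le> hi x"
  using rep unfolding interval_rep_def by blast

lemma z_neighbour: "x \<in> V - {v} - {z} \<Longrightarrow> E z x \<Longrightarrow> lo z \<le> hi x \<and> lo x \<le> hi z"
  using adj_iff[of z x] z_in_V v_ne_z by auto

text \<open>Two neighbours of z whose intervals start before I_z both contain lo z.\<close>
lemma left_starters_adjacent:
  assumes "x \<in> V - {v} - {z}" "y \<in> V - {v} - {z}" "x \<noteq> y" "E z x" "E z y"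
    and "lo x < lo z" "lo y < lo z"
  shows "E x y"
  using z_neighbour[OF assms(1,4)] z_neighbour[OF assms(2,5)] adj_iff[of x y] assms by auto

text \<open>Hence, as different components are non-adjacent, at most one protrudes to the left.\<close>
lemma card_left_comps: "card (left_comps lo v) \<le> 1"
proof -
  have "C1 = C2" if C: "C1 \<in> left_comps lo v" "C2 \<in> left_comps lo v" for C1 C2
  proof (rule ccontr)
    assume ne: "C1 \<noteq> C2"
    obtain w1 where w1: "w1 \<in> C1 - {v}" "lo w1 < lo z" using C(1) unfolding left_comps_def by blast
    obtain w2 where w2: "w2 \<in> C2 - {v}" "lo w2 < lo z" using C(2) unfolding left_comps_def by blast
    have NE: "C1 \<in> NE" "C2 \<in> NE" using C unfolding left_comps_def by auto
    have "w1 \<noteq> w2" using LC_disjoint[of C1 C2] NE ne w1 w2 by blast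
    moreover have "w1 \<in> V - {v} - {z}" "w2 \<in> V - {v} - {z}" using LC_subset NE w1 w2 by blast+
    ultimately have "E w1 w2" using left_starters_adjacent NE_adjacent NE w1 w2 by blast
    then show False using LC_no_edge[of C1 C2 w1 w2] NE ne w1 w2 by blast
  qed
  moreover have "finite (left_comps lo v)"
    using finite_NE unfolding left_comps_def by (rule rev_finite_subset) blast
  ultimately show ?thesis using card_le_Suc0_iff_eq by (metis One_nat_def)
qed

lemma nested_cover:
  assumes "C \<in> NE" "C \<notin> protruding lo hi v"
  shows "C - {v} \<subseteq> nested lo hi v"
proof
  fix w assume w: "w \<in> C - {v}"
  then have "\<not> lo w < lo z" "\<not> hi z < hi w"
    using assms unfolding protruding_def left_comps_def right_comps_def by blast+
  moreover have "w \<in> V - {v} - {z}" using assms(1) w LC_subset by blast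
  ultimately show "w \<in> nested lo hi v" unfolding nested_def by auto
qed

text \<open>A non-clique component not protruding to the left has a nested interval: of two
  non-adjacent vertices, the interval ending first lies in I_z.\<close>
lemma nonclique_meets_nested_left:
  assumes C: "C \<in> NE" "v \<notin> C" "\<not> is_clique E C" "C \<notin> left_comps lo v"
  shows "C \<inter> nested lo hi v \<noteq> {}"
proof -
  obtain x y where xy: "x \<in> C" "y \<in> C" "x \<noteq> y" "\<not> E x y"
    using C(3) unfolding is_clique_def by blast
  have S: "x \<in> V - {v} - {z}" "y \<in> V - {v} - {z}" using xy C(1,2) LC_subset by blast+
  have starts: "lo z \<le> lo x" "lo z \<le> lo y" using C(1,2,4) xy unfolding left_comps_def by auto
  have ends: "lo x \<le> hi z" "lo y \<le> hi z" using z_neighbour S NE_adjacent[OF C(1)] xy by blast+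
  have "hi x < lo y \<or> hi y < lo x" using adj_iff[of x y] S xy by auto
  then have "x \<in> nested lo hi v \<or> y \<in> nested lo hi v"
    using starts ends lo_le_hi S unfolding nested_def by auto
  then show ?thesis using xy by blast
qed

lemma card_left_starters:
  assumes W: "W \<subseteq> V - {v} - {z}" "\<And>w. w \<in> W \<Longrightarrow> E z w"
    and indep: "\<And>w w'. w \<in> W \<Longrightarrow> w' \<in> W \<Longrightarrow> w \<noteq> w' \<Longrightarrow> \<not> E w w'"
  shows "card {w \<in> W. lo w < lo z} \<le> 1"
proof -
  have "w = w'" if w: "w \<in> W" "lo w < lo z" and w': "w' \<in> W" "lo w' < lo z" for w w'
  proof (rule ccontr)
    assume ne: "w \<noteq> w'"
    have "w \<in> V - {v} - {z}" "w' \<in> V - {v} - {z}" using W(1) w(1) w'(1) by blast+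
    then have "E w w'" using left_starters_adjacent ne W(2)[OF w(1)] W(2)[OF w'(1)] w(2) w'(2) by blast
    then show False using indep[OF w(1) w'(1) ne] by blast
  qed
  moreover have "finite {w \<in> W. lo w < lo z}"
    using W(1) finite_V by (auto intro: finite_subset)
  ultimately show ?thesis using card_le_Suc0_iff_eq by (metis (no_types, lifting) One_nat_def mem_Collect_eq)
qed

lemma left_comps_blocked:
  assumes u: "u \<in> V - {v} - {z}" "E z u" "lo u < lo z"
    and sep: "\<And>C w. C \<in> NE \<Longrightarrow> w \<in> C \<Longrightarrow> w \<noteq> u \<and> \<not> E w u"
  shows "left_comps lo v = {}"
proof (rule ccontr)
  assume "left_comps lo v \<noteq> {}"
  then obtain C w where C: "C \<in> NE" "w \<in> C - {v}" "lo w < lo z"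
    unfolding left_comps_def by blast
  have "w \<in> V - {v} - {z}" using C(1,2) LC_subset by blast
  then have "E w u" using left_starters_adjacent[of w u] u sep[OF C(1)] C NE_adjacent by blast
  then show False using sep[OF C(1)] C(2) by blast
qed

end

lemma card_right_comps:
  "interval_rep (V - {v}) E lo hi \<Longrightarrow> v \<noteq> z \<Longrightarrow> card (right_comps hi v) \<le> 1"
  using card_left_comps[OF interval_rep_mirror] by (simp add: right_comps_mirror)

lemma nonclique_meets_nested:
  assumes rep: "interval_rep (V - {v}) E lo hi" and "v \<noteq> z"
    and C: "C \<in> NE" "v \<notin> C" "\<not> is_clique E C" "C \<notin> left_comps lo v \<or> C \<notin> right_comps hi v"
  shows "C \<inter> nested lo hi v \<noteq> {}"
  using C(4) nonclique_meets_nested_left[OF rep \<open>v \<noteq> z\<close> C(1-3)]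
    nonclique_meets_nested_left[OF interval_rep_mirror[OF rep] \<open>v \<noteq> z\<close> C(1-3)]
  by (auto simp: right_comps_mirror nested_mirror)

lemma independent_nested_bound:
  assumes rep: "interval_rep (V - {v}) E lo hi" and "v \<noteq> z"
    and W: "W \<subseteq> V - {v} - {z}" "\<And>w. w \<in> W \<Longrightarrow> E z w"
    and indep: "\<And>w w'. w \<in> W \<Longrightarrow> w' \<in> W \<Longrightarrow> w \<noteq> w' \<Longrightarrow> \<not> E w w'"
  shows "card W \<le> card (nested lo hi v) + 2"
proof -
  define L where "L = {w \<in> W. lo w < lo z}"
  define R where "R = {w \<in> W. hi z < hi w}"
  have fin_W: "finite W" using W(1) finite_V by (auto intro: finite_subset)
  have card_L: "card L \<le> 1" unfolding L_def by (rule card_left_starters[OF rep \<open>v \<noteq> z\<close> W indep])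
  have card_R: "card R \<le> 1"
    using card_left_starters[OF interval_rep_mirror[OF rep] \<open>v \<noteq> z\<close> W indep] unfolding R_def by simp
  have "W - (L \<union> R) \<subseteq> nested lo hi v" using W(1) unfolding L_def R_def nested_def by auto
  then have card_rest: "card (W - (L \<union> R)) \<le> card (nested lo hi v)"
    by (rule card_mono[OF finite_nested])
  have sub: "L \<union> R \<subseteq> W" unfolding L_def R_def by auto
  then have "card W = card (W - (L \<union> R)) + card (L \<union> R)"
    using card_Diff_subset[OF finite_subset[OF sub fin_W] sub] card_mono[OF fin_W sub] by linarith
  then show ?thesis using card_L card_R card_rest card_Un_le[of L R] by linarith
qed

(* Counting maximum cliques.  With j = |NE| + 2 - n, the protrusion bound for a vertex v
   says that every representation of G - v has at most j protruding components, and
   exactly j only if none of them protrudes on both sides. *)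

definition few_protruding :: "nat \<Rightarrow> 'a \<Rightarrow> bool" where
  "few_protruding j v \<longleftrightarrow> (\<forall>lo hi. interval_rep (V - {v}) E lo hi \<longrightarrow>
     card (protruding lo hi v) \<le> j \<and>
     (card (protruding lo hi v) = j \<longrightarrow> left_comps lo v \<inter> right_comps hi v = {}))"

lemma deletion_exchange:
  assumes D: "D \<in> NE" "v \<in> D" "\<And>C. C \<in> NE \<Longrightarrow> card C \<le> card D"
    and j: "card NE + 2 = n + j" and few: "few_protruding j v"
  shows "\<exists>B \<subseteq> NE. card B = j \<and> D \<notin> B \<and> (\<forall>C\<in>B. card C = card D \<and> is_clique E C)"
proof -
  have v: "v \<in> V" "v \<noteq> z" using LC_subset D(1,2) by blast+
  obtain lo hi where rep: "interval_rep (V - {v}) E lo hi" and imp: "imp_at (V - {v}) lo hi z < p"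
    using deletion[OF v] by blast
  define B where "B = protruding lo hi v"
  have B_sub: "B \<subseteq> NE" unfolding B_def by (rule protruding_subset)
  have fin_B: "finite B" using finite_subset[OF B_sub finite_NE] .
  have card_B: "card B \<le> j" and one_sided: "card B = j \<Longrightarrow> left_comps lo v \<inter> right_comps hi v = {}"
    using few rep unfolding few_protruding_def B_def by blast+
  have card_rest: "card (NE - B) = card NE - card B" using card_Diff_subset[OF fin_B B_sub] .
  have card_B_NE: "card B \<le> card NE" using card_mono[OF finite_NE B_sub] .
  have rest: "n - 2 \<le> card (NE - B)" using card_rest card_B card_B_NE j three_components by linarith
  have nested_small: "card (nested lo hi v) < p" using imp by (simp add: imp_at_nested)
  have cover: "C - {v} \<subseteq> nested lo hi v" if "C \<in> NE - B" for C
    using nested_cover[OF rep v(2)] that unfolding B_def by blast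
  have meets: "C \<inter> nested lo hi v \<noteq> {}"
    if C: "C \<in> B" "C \<noteq> D" "card (NE - B) = n - 2" "\<not> is_clique E C" for C
  proof -
    have "card B = j" using C(3) card_rest card_B_NE j three_components by linarith
    then have "C \<notin> left_comps lo v \<or> C \<notin> right_comps hi v" using one_sided by blast
    moreover have "v \<notin> C" using LC_disjoint[of C D] C(1,2) B_sub D(1,2) by blast
    ultimately show ?thesis using nonclique_meets_nested[OF rep v(2)] C(1,4) B_sub by blast
  qed
  have "D \<notin> B \<and> card (NE - B) = n - 2 \<and> (\<forall>C\<in>B. card C = card D \<and> is_clique E C)"
    by (rule exchange[OF finite_NE _ NE_pairwise_disjnt wt_lower_bound D B_sub rest
          finite_nested nested_small cover meets]) (simp add: LC_finite)
  moreover have "card B = j" if "card (NE - B) = n - 2"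
    using that card_rest card_B_NE j three_components by linarith
  ultimately show ?thesis using B_sub by blast
qed

text \<open>If a largest local component is non-exterior and the protrusion bound holds for
  every vertex of a non-exterior component, there are at least j + 1 maximum cliques:
  choose D to be a maximum clique whenever one exists.\<close>
lemma many_max_cliques:
  assumes max_NE: "\<exists>D\<in>NE. card D = Max (card ` LC)"
    and j: "card NE + 2 = n + j" "1 \<le> j"
    and few: "\<And>v. v \<in> \<Union>NE \<Longrightarrow> few_protruding j v"
  shows "j + 1 \<le> card (max_clique_components V E z)"
proof -
  define M where "M = Max (card ` LC)"
  have le_M: "card C \<le> M" if "C \<in> NE" for C unfolding M_def using finite_LC that by simp
  let ?good = "\<lambda>C. C \<in> NE \<and> card C = M \<and> is_clique E C"
  have "\<exists>D. D \<in> NE \<and> card D = M \<and> ((\<exists>C. ?good C) \<longrightarrow> is_clique E D)"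
  proof (cases "\<exists>C. ?good C")
    case True
    then show ?thesis by blast
  next
    case False
    then show ?thesis using max_NE unfolding M_def by blast
  qed
  then obtain D where D: "D \<in> NE" "card D = M" and clique_choice: "(\<exists>C. ?good C) \<Longrightarrow> is_clique E D"
    by blast
  obtain v where v: "v \<in> D" using LC_card_pos[of D] D(1) by fastforce
  have "\<And>C. C \<in> NE \<Longrightarrow> card C \<le> card D" using le_M D(2) by simp
  moreover have "few_protruding j v" using few v D(1) by blast
  ultimately obtain B where B: "B \<subseteq> NE" "card B = j" "D \<notin> B" "\<forall>C\<in>B. card C = M \<and> is_clique E C"
    using deletion_exchange[OF D(1) v _ j(1)] D(2) by blast
  have B_max: "B \<subseteq> max_clique_components V E z"
    using B(1,4) unfolding max_clique_components_def M_def by blast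
  have fin_max: "finite (max_clique_components V E z)"
    unfolding max_clique_components_def using finite_LC by simp
  text \<open>B is non-empty, so a maximum clique exists, D is one of them, and D \<notin> B.\<close>
  obtain C where "C \<in> B" using B(2) j(2) by fastforce
  then have "is_clique E D" using clique_choice B(1,4) by blast
  then have "insert D B \<subseteq> max_clique_components V E z"
    using B_max D unfolding max_clique_components_def M_def by blast
  then have "card (insert D B) \<le> card (max_clique_components V E z)"
    using fin_max by (rule card_mono[rotated])
  then show ?thesis using B(2,3) finite_subset[OF B(1) finite_NE] by simp
qed

text \<open>A vertex outside all non-exterior components cannot be deleted when the protrusion
  bound holds: the at least n - 2 non-protruding components are then entirely nested.\<close>
lemma deletion_outside_NE:
  assumes v: "v \<in> V" "v \<noteq> z" "v \<notin> \<Union>NE"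
    and j: "card NE + 2 = n + j" and few: "few_protruding j v"
  shows False
proof -
  obtain lo hi where rep: "interval_rep (V - {v}) E lo hi" and imp: "imp_at (V - {v}) lo hi z < p"
    using deletion[OF v(1,2)] by blast
  define A where "A = NE - protruding lo hi v"
  have A_sub: "A \<subseteq> NE" unfolding A_def by blast
  have fin_B: "finite (protruding lo hi v)" using finite_subset[OF protruding_subset finite_NE] .
  have "card (protruding lo hi v) \<le> j" using few rep unfolding few_protruding_def by blast
  then have "n - 2 \<le> card A"
    using card_Diff_subset[OF fin_B protruding_subset] card_mono[OF finite_NE protruding_subset]
      j three_components unfolding A_def by linarith
  then have "p \<le> (\<Sum>C\<in>A. card C)" using wt_lower_bound A_sub by blast
  also have "\<dots> = card (\<Union>A)"
    using NE_pairwise_disjnt A_sub LC_finite by (subst card_Union_disjoint) (auto simp: pairwise_subset)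
  also have "\<dots> \<le> card (nested lo hi v)"
  proof (rule card_mono[OF finite_nested], rule Union_least)
    fix C assume C: "C \<in> A"
    then have "C - {v} \<subseteq> nested lo hi v" using nested_cover[OF rep v(2)] unfolding A_def by blast
    moreover have "v \<notin> C" using v(3) C A_sub by blast
    ultimately show "C \<subseteq> nested lo hi v" by blast
  qed
  finally show False using imp by (simp add: imp_at_nested)
qed

text \<open>As at most one component protrudes on each side, the protrusion bound always holds
  with j = 2.\<close>
lemma few_protruding_two:
  assumes "v \<noteq> z"
  shows "few_protruding 2 v"
  unfolding few_protruding_def
proof (intro allI impI)
  fix lo hi assume rep: "interval_rep (V - {v}) E lo hi"
  let ?L = "left_comps lo v" and ?R = "right_comps hi v"
  have fin: "finite ?L" "finite ?R"
    using finite_subset[OF protruding_subset finite_NE] unfolding protruding_def by auto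
  have "card ?L + card ?R = card (protruding lo hi v) + card (?L \<inter> ?R)"
    unfolding protruding_def by (rule card_Un_Int[OF fin])
  moreover have "card ?L \<le> 1" "card ?R \<le> 1"
    using card_left_comps[OF rep assms] card_right_comps[OF rep assms] .
  moreover have "card (?L \<inter> ?R) = 0 \<Longrightarrow> ?L \<inter> ?R = {}" using fin by simp
  ultimately show "card (protruding lo hi v) \<le> 2 \<and>
      (card (protruding lo hi v) = 2 \<longrightarrow> ?L \<inter> ?R = {})" by linarith
qed

lemma few_protruding_one:
  assumes "v \<noteq> z"
    and blocked: "\<And>lo hi. interval_rep (V - {v}) E lo hi \<Longrightarrow>
      left_comps lo v = {} \<or> right_comps hi v = {}"
  shows "few_protruding 1 v"
  unfolding few_protruding_def
proof (intro allI impI)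
  fix lo hi assume rep: "interval_rep (V - {v}) E lo hi"
  then show "card (protruding lo hi v) \<le> 1 \<and>
      (card (protruding lo hi v) = 1 \<longrightarrow> left_comps lo v \<inter> right_comps hi v = {})"
    using blocked[OF rep] card_left_comps[OF rep \<open>v \<noteq> z\<close>]
      card_right_comps[OF rep \<open>v \<noteq> z\<close>]
    unfolding protruding_def by auto
qed

theorem no_exterior_max_cliques:
  assumes "{C \<in> LC. exterior E z C} = {}"
  shows "3 \<le> card (max_clique_components V E z)"
proof -
  have NE_LC: "NE = LC" using assms by blast
  have "Max (card ` LC) \<in> card ` LC" using finite_LC three_components by (intro Max_in) auto
  then have max_NE: "\<exists>D\<in>NE. card D = Max (card ` LC)" using NE_LC by auto
  have "few_protruding 2 v" if "v \<in> \<Union>NE" for v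
    using few_protruding_two LC_subset that by blast
  then have "2 + 1 \<le> card (max_clique_components V E z)"
    using many_max_cliques[OF max_NE] NE_LC by simp
  then show ?thesis by simp
qed

context
  fixes X :: "'a set"
  assumes ext_X: "{C \<in> LC. exterior E z C} = {X}" and connected: "connected_graph V E"
begin

lemma X_LC: "X \<in> LC" and X_exterior: "exterior E z X"
  using ext_X by blast+

lemma NE_eq: "NE = LC - {X}"
  using ext_X by blast

lemma card_NE: "card NE + 2 = n + 1"
  using card.remove[OF finite_LC X_LC] NE_eq by simp

lemma NE_X_separated: "C \<in> NE \<Longrightarrow> w \<in> C \<Longrightarrow> u \<in> X \<Longrightarrow> w \<noteq> u \<and> \<not> E w u"
  using LC_disjoint[of C X] LC_no_edge[of C X w u] X_LC NE_eq by blast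

text \<open>By connectivity, X contains a neighbour u of z adjacent to a non-neighbour x of z:
  follow a path from a non-neighbour of z to z until it first meets a neighbour of z.\<close>
lemma bridge: "\<exists>x u. x \<in> X \<and> u \<in> X \<and> \<not> E z x \<and> E z u \<and> E x u"
proof -
  obtain x0 where x0: "x0 \<in> X" "\<not> E z x0" using X_exterior unfolding exterior_def by blast
  have X_sub: "X \<subseteq> V - {z}" using LC_subset[OF X_LC] .
  have path: "reach V E x0 z"
    using connected x0(1) X_sub z_in_V unfolding connected_graph_def by blast
  define T where "T = {w. \<not> E z w \<and> w \<noteq> z}"
  have "x0 \<in> T" "z \<notin> T" using x0 X_sub unfolding T_def by auto
  then obtain c d where cd: "reach (V \<inter> T) E x0 c" "c \<in> V \<inter> T" "E c d" "d \<in> V" "d \<notin> T"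
    using reach_exit[OF path] by meson
  have c: "\<not> E z c" "c \<in> V - {z}" using cd(2) unfolding T_def by auto
  have "d \<noteq> z" using sym_V[of c z] cd(3) c z_in_V by blast
  then have d: "E z d" "d \<in> V - {z}" using cd(4,5) unfolding T_def by auto
  have "V \<inter> T \<subseteq> V - {z}" unfolding T_def by blast
  then have "reach (V - {z}) E x0 c" by (rule reach_mono[OF cd(1)])
  then have c_X: "c \<in> X"
    using component_closed[of X "V - {z}" E x0 c] X_LC x0(1) c(2)
    unfolding local_components_def by blast
  have "reach (V - {z}) E c d" using reach_edge[of E c d "V - {z}"] cd(3) c(2) d(2) by blast
  then have "d \<in> X"
    using component_closed[of X "V - {z}" E c d] X_LC c_X d(2)
    unfolding local_components_def by blast
  then show ?thesis using c_X c(1) d(1) cd(3) by blast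
qed

text \<open>Let x, u \<in> X with u adjacent to z and x, but x not adjacent to z.  After deleting any
  other vertex, I_x misses I_z and meets I_u, so I_u reaches beyond I_z on the side of I_x,
  and blocks that side.\<close>
lemma one_side_blocked:
  assumes x: "x \<in> X" "\<not> E z x" and u: "u \<in> X" "E z u" "E x u"
    and v: "v \<noteq> x" "v \<noteq> u" "v \<noteq> z" and rep: "interval_rep (V - {v}) E lo hi"
  shows "left_comps lo v = {} \<or> right_comps hi v = {}"
proof -
  have S: "x \<in> V - {v} - {z}" "u \<in> V - {v} - {z}" using x(1) u(1) LC_subset[OF X_LC] v by blast+
  have "x \<noteq> u" using x(2) u(2) by blast
  have sep: "\<And>C w. C \<in> NE \<Longrightarrow> w \<in> C \<Longrightarrow> w \<noteq> u \<and> \<not> E w u" using NE_X_separated u(1) by blast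
  have "\<not> (lo z \<le> hi x \<and> lo x \<le> hi z)" using adj_iff[OF rep v(3), of z x] S z_in_V v x(2) by auto
  moreover have "lo x \<le> hi u" "lo u \<le> hi x" using adj_iff[OF rep v(3), of x u] S \<open>x \<noteq> u\<close> u(3) by auto
  ultimately consider "lo u < lo z" | "- hi u < - hi z" by linarith
  then show ?thesis
  proof cases
    case 1
    have "left_comps lo v = {}" by (rule left_comps_blocked[OF rep v(3) S(2) u(2) 1]) (fact sep)
    then show ?thesis ..
  next
    case 2
    have "left_comps (\<lambda>w. - hi w) v = {}"
      by (rule left_comps_blocked[OF interval_rep_mirror[OF rep] v(3) S(2) u(2) 2]) (fact sep)
    then show ?thesis by (simp add: right_comps_mirror)
  qed
qed

lemma few_protruding_bridge:
  assumes x: "x \<in> X" "\<not> E z x" and u: "u \<in> X" "E z u" "E x u"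
    and v: "v \<noteq> x" "v \<noteq> u" "v \<noteq> z"
  shows "few_protruding 1 v"
proof (rule few_protruding_one[OF v(3)])
  fix lo hi assume "interval_rep (V - {v}) E lo hi"
  then show "left_comps lo v = {} \<or> right_comps hi v = {}" by (rule one_side_blocked[OF x u v])
qed

text \<open>X has at most two vertices: deleting a third one would contradict criticality.\<close>
lemma card_X_le_2: "card X \<le> 2"
proof (rule ccontr)
  assume "\<not> card X \<le> 2"
  obtain x u where x: "x \<in> X" "\<not> E z x" and u: "u \<in> X" "E z u" "E x u"
    using bridge by blast
  have "card {x, u} \<le> 2" by (cases "x = u") auto
  then have "\<not> X \<subseteq> {x, u}" using \<open>\<not> card X \<le> 2\<close> card_mono[of "{x, u}" X] by fastforce
  then obtain v where v: "v \<in> X" "v \<noteq> x" "v \<noteq> u" by blast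
  have "v \<in> V" "v \<noteq> z" using v(1) LC_subset[OF X_LC] by blast+
  moreover have "v \<notin> \<Union>NE" using NE_X_separated v(1) by blast
  ultimately show False
    using deletion_outside_NE[OF _ _ _ card_NE few_protruding_bridge[OF x u v(2,3)]] by blast
qed

lemma independent_singletons:
  assumes singleton: "\<And>D. D \<in> NE \<Longrightarrow> card D = 1" and u: "u \<in> X"
    and w: "w \<in> insert u (\<Union>NE)" "w' \<in> insert u (\<Union>NE)" "w \<noteq> w'"
  shows "\<not> E w w'"
proof
  assume e: "E w w'"
  consider C where "w = u" "C \<in> NE" "w' \<in> C" | C where "w' = u" "C \<in> NE" "w \<in> C"
    | C C' where "C \<in> NE" "w \<in> C" "C' \<in> NE" "w' \<in> C'"
    using w by blast
  then show False
  proof cases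
    case (1 C)
    then have "w' \<in> V" "u \<in> V" using LC_subset LC_subset[OF X_LC] u by blast+
    then show False using NE_X_separated[OF 1(2,3) u] sym_V e 1(1) by blast
  next
    case (2 C)
    then show False using NE_X_separated[OF 2(2,3) u] e by blast
  next
    case (3 C C')
    show False
    proof (cases "C = C'")
      case True
      then show False using singleton[OF 3(1)] 3 w(3) by (metis card_1_singletonE singletonD)
    next
      case False
      then show False using LC_no_edge[of C C' w w'] 3 e by blast
    qed
  qed
qed

text \<open>Otherwise all of them are
  single vertices; deleting x, they and u form an independent set of n neighbours of z,
  of which at least n - 2 are nested, while p \<le> n - 2.\<close>
lemma NE_not_smaller: "\<exists>D\<in>NE. card X \<le> card D"
proof (rule ccontr)
  assume "\<not> (\<exists>D\<in>NE. card X \<le> card D)"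
  then have singleton: "card D = 1" if "D \<in> NE" for D
    using that card_X_le_2 LC_card_pos[of D] by force
  obtain x u where x: "x \<in> X" "\<not> E z x" and u: "u \<in> X" "E z u" "E x u"
    using bridge by blast
  have "x \<in> V" "x \<noteq> z" using x(1) LC_subset[OF X_LC] by blast+
  then obtain lo hi where rep: "interval_rep (V - {x}) E lo hi"
    and imp: "imp_at (V - {x}) lo hi z < p"
    using deletion by blast
  define W where "W = insert u (\<Union>NE)"
  have u_out: "u \<notin> \<Union>NE" using NE_X_separated u(1) by blast
  have "W \<subseteq> V - {x} - {z}"
    using LC_subset LC_subset[OF X_LC] NE_X_separated x(1) u(1) x(2) u(2)
    unfolding W_def by blast
  moreover have "E z w" if "w \<in> W" for w using that u(2) NE_adjacent unfolding W_def by blast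
  ultimately have nested_W: "card W \<le> card (nested lo hi x) + 2"
    using independent_nested_bound[OF rep \<open>x \<noteq> z\<close>] independent_singletons[OF singleton u(1)]
    unfolding W_def by blast
  have "card (\<Union>NE) = card NE"
    using NE_pairwise_disjnt LC_finite singleton
    by (subst card_Union_disjoint) (auto simp: pairwise_subset)
  moreover have "finite (\<Union>NE)" using finite_NE LC_finite by blast
  ultimately have "card W = n" using card_NE u_out unfolding W_def by simp
  moreover have "p \<le> n - 2" using p_le_singletons[OF singleton] card_NE by simp
  ultimately show False using nested_W imp three_components by (simp add: imp_at_nested)
qed

lemma largest_in_NE: "\<exists>D\<in>NE. card D = Max (card ` LC)"
proof -
  have "Max (card ` LC) \<in> card ` LC" using finite_LC three_components by (intro Max_in) auto
  then obtain C0 where C0: "C0 \<in> LC" "card C0 = Max (card ` LC)" by (metis imageE)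
  show ?thesis
  proof (cases "C0 = X")
    case True
    obtain D where D: "D \<in> NE" "card X \<le> card D" using NE_not_smaller by blast
    have "card D \<le> Max (card ` LC)" using finite_LC D(1) by simp
    then show ?thesis using D C0 True by (metis le_antisym)
  next
    case False
    then show ?thesis using C0 NE_eq by blast
  qed
qed

theorem one_exterior_max_cliques: "2 \<le> card (max_clique_components V E z)"
proof -
  obtain x u where x: "x \<in> X" "\<not> E z x" and u: "u \<in> X" "E z u" "E x u"
    using bridge by blast
  have "few_protruding 1 v" if "v \<in> \<Union>NE" for v
  proof (rule few_protruding_bridge[OF x u])
    show "v \<noteq> x" "v \<noteq> u" using that x(1) u(1) NE_X_separated by blast+
    show "v \<noteq> z" using that LC_subset by blast
  qed
  then have "1 + 1 \<le> card (max_clique_components V E z)"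
    using many_max_cliques[OF largest_in_NE card_NE] by simp
  then show ?thesis by simp
qed

end

end


text \<open>A balanced p-critical interval graph is an instance of the locale at its basepoint:
  deleting v \<noteq> z, an optimal representation of G - v has impropriety, and so in particular
  imp at z, below p.\<close>
lemma critical_basepointI:
  assumes interval: "interval_graph V E" and crit: "critical p V E" and base: "basepoint V E z"
  shows "critical_basepoint V E z p"
proof
  show simple: "simple_graph V E" using interval unfolding interval_graph_def by blast
  show "z \<in> V" using base unfolding basepoint_def by blast
  show "p = wt_at V E z" "1 \<le> p" using crit base unfolding critical_def basepoint_def by auto
  fix v assume v: "v \<in> V" "v \<noteq> z"
  obtain lo0 hi0 where "interval_rep V E lo0 hi0" using interval unfolding interval_graph_def by blast
  then have "interval_rep (V - {v}) E lo0 hi0" by (rule interval_rep_restrict) blast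
  then obtain lo hi where rep: "interval_rep (V - {v}) E lo hi"
    and opt: "imp_rep (V - {v}) lo hi = impropriety (V - {v}) E"
    using optimal_rep by blast
  have "impropriety (V - {v}) E < p" using crit v(1) unfolding critical_def by blast
  moreover have "imp_at (V - {v}) lo hi z \<le> imp_rep (V - {v}) lo hi"
    using simple \<open>z \<in> V\<close> v(2) unfolding simple_graph_def by (intro imp_at_le_imp_rep) auto
  ultimately have "imp_at (V - {v}) lo hi z < p" using opt by linarith
  then show "\<exists>lo hi. interval_rep (V - {v}) E lo hi \<and> imp_at (V - {v}) lo hi z < p"
    using rep by blast
qed

theorem theorem3p3:
  fixes V :: "'a set" and E :: "'a \<Rightarrow> 'a \<Rightarrow> bool" and p :: nat and z :: 'a
  assumes "interval_graph V E"
    and "connected_graph V E"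
    and "balanced V E"
    and "p \<ge> 1"
    and "critical p V E"
    and "basepoint V E z"
  shows "(card {C \<in> local_components V E z. exterior E z C} \<le> 1 \<longrightarrow>
            card (max_clique_components V E z) \<ge> 2)
       \<and> (card {C \<in> local_components V E z. exterior E z C} = 0 \<longrightarrow>
            card (max_clique_components V E z) \<ge> 3)"
proof -
  interpret critical_basepoint V E z p
    using critical_basepointI assms(1,5,6) .
  let ?ext = "{C \<in> LC. exterior E z C}"
  have "finite ?ext" using finite_LC by simp
  then have none_or_one: "?ext = {} \<or> (\<exists>X. ?ext = {X})" if "card ?ext \<le> 1"
    using that by (metis card_0_eq card_1_singletonE le_SucE One_nat_def le_zero_eq)
  show ?thesis
  proof (intro conjI impI)
    assume "card ?ext \<le> 1"
    then show "2 \<le> card (max_clique_components V E z)"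
      using none_or_one no_exterior_max_cliques one_exterior_max_cliques[OF _ assms(2)] by fastforce
  next
    assume "card ?ext = 0"
    then show "3 \<le> card (max_clique_components V E z)"
      using \<open>finite ?ext\<close> no_exterior_max_cliques by simp
  qed
qed

end
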